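(* Let $G$ be a finite group with $d(G) \geq 2$. Then $\mathrm{Cyc}(G)$ is the smallest normal subgroup $N$ of $G$ such that $\mathrm{Cyc}(G/N)$ is trivial; that is, $\mathrm{Cyc}(G/\mathrm{Cyc}(G))=1$, and $\mathrm{Cyc}(G) \leq N$ for every normal subgroup $N$ of $G$ with $\mathrm{Cyc}(G/N)=1$.
   Context: For a finite group $H$, $d(H)$ denotes the minimal size of a generating set of $H$. The cycliciser of a group $H$ is $\mathrm{Cyc}(H) = \{c \in H \mid \langle c,h\rangle \text{ is cyclic for all } h \in H\}$; for finite $H$ it is a normal subgroup of $H$. *)

theory Defs
  imports "HOL-Algebra.Algebra"
begin

definition min_gen_size :: "('a, 'b) monoid_scheme \<Rightarrow> nat" where
  "min_gen_size G = (LEAST n. \<exists>S. S \<subseteq> carrier G \<and> finite S \<and> card S = n \<and> generate G S = carrier G)"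

definition cyclic_in :: "('a, 'b) monoid_scheme \<Rightarrow> 'a set \<Rightarrow> bool" where
  "cyclic_in G H = (\<exists>g \<in> carrier G. H = generate G {g})"

definition cycliciser :: "('a, 'b) monoid_scheme \<Rightarrow> 'a set" where
  "cycliciser G = {c \<in> carrier G. \<forall>h \<in> carrier G. cyclic_in G (generate G {c, h})}"

end

theory Submission
  imports Defs
begin

text \<open>
  An element c lies in Cyc(G) iff every h shares a cyclic subgroup with c, because subgroups
  of cyclic groups generated by two elements are cyclic. In this form an element of Cyc(G) can
  be absorbed into any cyclic subgroup: for every y there is a w with c in \<langle>w\<rangle> and
  \<langle>y\<rangle> \<le> \<langle>w\<rangle>. This gives closure under products, and the image of
  Cyc(G) under a surjective homomorphism lies in the cycliciser of the image, whence minimality.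
  If Z = Cyc(G) and gZ is in Cyc(G/Z), then for every h both g and h lie in \<langle>y\<rangle>Z
  for some y; absorbing the two elements of Z that occur puts g and h into a single cyclic
  subgroup, so g is in Z.
\<close>

context group
begin

lemma generate_singleton_subset:
  assumes "w \<in> carrier G" and "a \<in> generate G {w}"
  shows "generate G {a} \<subseteq> generate G {w}"
  using assms generate_subgroup_incl generate_is_subgroup by simp

lemma cyclic_in_generate_pair:
  assumes w: "w \<in> carrier G" and a: "a \<in> generate G {w}" and b: "b \<in> generate G {w}"
  shows "cyclic_in G (generate G {a, b})"
proof -
  obtain i where i: "a = w [^] (i::int)" using a generate_pow[OF w] by auto
  obtain j where j: "b = w [^] (j::int)" using b generate_pow[OF w] by auto
  define g where "g = w [^] gcd i j"
  have g: "g \<in> carrier G" using w g_def by simp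
  have ab: "a \<in> carrier G" "b \<in> carrier G" using i j w by auto
  obtain u v where uv: "u * i + v * j = gcd i j" using bezout_int by blast
  have "g = a [^] u \<otimes> b [^] v"
    using w by (simp add: g_def i j int_pow_pow int_pow_mult flip: uv) (simp add: mult.commute)
  moreover have "a [^] u \<in> generate G {a, b}" "b [^] v \<in> generate G {a, b}"
    using subgroup_int_pow_closed[OF generate_is_subgroup generate.incl] ab by auto
  ultimately have "g \<in> generate G {a, b}"
    using generate.eng by metis
  hence "generate G {g} \<subseteq> generate G {a, b}"
    using generate_subgroup_incl[OF _ generate_is_subgroup] ab by auto
  moreover have "a = g [^] (i div gcd i j)" "b = g [^] (j div gcd i j)"
    using w by (simp_all add: g_def i j int_pow_pow)
  hence "a \<in> generate G {g}" "b \<in> generate G {g}"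
    using generate_pow[OF g] by auto
  hence "generate G {a, b} \<subseteq> generate G {g}"
    using generate_subgroup_incl[OF _ generate_is_subgroup] g by auto
  ultimately show ?thesis
    unfolding cyclic_in_def using g by blast
qed

lemma cycliciser_iff:
  "c \<in> cycliciser G \<longleftrightarrow> c \<in> carrier G \<and>
    (\<forall>h \<in> carrier G. \<exists>w \<in> carrier G. c \<in> generate G {w} \<and> h \<in> generate G {w})"
proof -
  have "cyclic_in G (generate G {c, h}) \<longleftrightarrow>
      (\<exists>w \<in> carrier G. c \<in> generate G {w} \<and> h \<in> generate G {w})" for h
  proof
    assume "cyclic_in G (generate G {c, h})"
    then obtain w where "w \<in> carrier G" "generate G {c, h} = generate G {w}"
      unfolding cyclic_in_def by blast
    thus "\<exists>w \<in> carrier G. c \<in> generate G {w} \<and> h \<in> generate G {w}"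
      using generate.incl[of _ "{c, h}" G] by blast
  qed (use cyclic_in_generate_pair in blast)
  thus ?thesis
    unfolding cycliciser_def by blast
qed

lemma cycliciser_subset_carrier: "cycliciser G \<subseteq> carrier G"
  unfolding cycliciser_def by auto

lemma one_in_cycliciser: "\<one> \<in> cycliciser G"
  unfolding cycliciser_iff by (auto intro: generate.one generate.incl)

lemma cycliciser_absorb:
  assumes "c \<in> cycliciser G" and "y \<in> carrier G"
  obtains w where "w \<in> carrier G" "c \<in> generate G {w}" "generate G {y} \<subseteq> generate G {w}"
  using assms generate_singleton_subset unfolding cycliciser_iff by meson

lemma inv_in_cycliciser:
  assumes "c \<in> cycliciser G"
  shows "inv c \<in> cycliciser G"
  using assms generate_is_subgroup subgroup.m_inv_closed unfolding cycliciser_iff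
  by (metis empty_subsetI inv_closed insert_subset)

lemma mult_in_cycliciser:
  assumes c1: "c1 \<in> cycliciser G" and c2: "c2 \<in> cycliciser G"
  shows "c1 \<otimes> c2 \<in> cycliciser G"
  unfolding cycliciser_iff
proof (intro conjI ballI)
  show "c1 \<otimes> c2 \<in> carrier G"
    using c1 c2 cycliciser_subset_carrier by auto
next
  fix h assume "h \<in> carrier G"
  then obtain y where y: "y \<in> carrier G" "c2 \<in> generate G {y}" "h \<in> generate G {y}"
    using c2 unfolding cycliciser_iff by blast
  obtain w where w: "w \<in> carrier G" "c1 \<in> generate G {w}" "generate G {y} \<subseteq> generate G {w}"
    using cycliciser_absorb[OF c1 y(1)] .
  have "c1 \<otimes> c2 \<in> generate G {w}"
    using w y subgroup.m_closed[OF generate_is_subgroup] by auto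
  thus "\<exists>w \<in> carrier G. c1 \<otimes> c2 \<in> generate G {w} \<and> h \<in> generate G {w}"
    using w y by blast
qed

lemma subgroup_cycliciser: "subgroup (cycliciser G) G"
  by (rule subgroupI)
    (use cycliciser_subset_carrier one_in_cycliciser inv_in_cycliciser mult_in_cycliciser in auto)

lemma cycliciser_commute:
  assumes c: "c \<in> cycliciser G" and h: "h \<in> carrier G"
  shows "c \<otimes> h = h \<otimes> c"
proof -
  obtain w where "w \<in> carrier G" "c \<in> generate G {w}" "h \<in> generate G {w}"
    using c h unfolding cycliciser_iff by blast
  then obtain i j where "w \<in> carrier G" "c = w [^] (i::int)" "h = w [^] (j::int)"
    using generate_pow by auto
  thus ?thesis by (simp add: int_pow_mult[symmetric] add.commute)
qed

lemma normal_cycliciser: "cycliciser G \<lhd> G"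
  unfolding normal_inv_iff
proof (intro conjI ballI subgroup_cycliciser)
  fix x c assume x: "x \<in> carrier G" and c: "c \<in> cycliciser G"
  have "x \<otimes> c \<otimes> inv x = c \<otimes> x \<otimes> inv x"
    using cycliciser_commute[OF c x] by simp
  also have "\<dots> = c"
    using x c cycliciser_subset_carrier by (auto simp add: m_assoc)
  finally show "x \<otimes> c \<otimes> inv x \<in> cycliciser G"
    using c by simp
qed

end

lemma (in group_hom) cycliciser_image:
  assumes surj: "h ` carrier G = carrier H" and c: "c \<in> cycliciser G"
  shows "h c \<in> cycliciser H"
  unfolding H.cycliciser_iff
proof (intro conjI ballI)
  show "h c \<in> carrier H"
    using c G.cycliciser_subset_carrier by auto
next
  fix x assume "x \<in> carrier H"
  then obtain y where y: "y \<in> carrier G" "x = h y"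
    using surj by auto
  then obtain w where w: "w \<in> carrier G" "c \<in> generate G {w}" "y \<in> generate G {w}"
    using c unfolding G.cycliciser_iff by blast
  have "h ` generate G {w} = generate H {h w}"
    using generate_img[of "{w}"] w(1) by simp
  thus "\<exists>w \<in> carrier H. h c \<in> generate H {w} \<and> x \<in> generate H {w}"
    using w y by (metis hom_closed image_eqI)
qed

lemma r_coset_group_hom:
  assumes "N \<lhd> G"
  shows "group_hom G (G Mod N) (\<lambda>a. N #>\<^bsub>G\<^esub> a)"
  unfolding group_hom_def group_hom_axioms_def
  using assms normal.r_coset_hom_Mod normal.factorgroup_is_group normal_def by blast

context group
begin

lemma rcos_in_generate_FactGroup:
  assumes N: "N \<lhd> G" and g: "g \<in> carrier G" and y: "y \<in> carrier G"
    and gy: "N #> g \<in> generate (G Mod N) {N #> y}"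
  obtains z g' where "z \<in> N" "g' \<in> generate G {y}" "g = z \<otimes> g'"
proof -
  have "generate (G Mod N) {N #> y} = (\<lambda>a. N #> a) ` generate G {y}"
    using group_hom.generate_img[OF r_coset_group_hom[OF N], of "{y}"] y by simp
  then obtain g' where g': "g' \<in> generate G {y}" "N #> g = N #> g'"
    using gy by auto
  have "g \<in> N #> g'"
    using repr_independenceD[OF normal_imp_subgroup[OF N] g g'(2)[symmetric]] .
  thus ?thesis
    using that g'(1) unfolding r_coset_def by blast
qed

lemma cycliciser_quotient_preimage:
  assumes N: "N \<lhd> G" and N_cyc: "N \<subseteq> cycliciser G"
    and g: "g \<in> carrier G" and gN: "N #> g \<in> cycliciser (G Mod N)"
  shows "g \<in> cycliciser G"
  unfolding cycliciser_iff
proof (intro conjI ballI g)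
  fix h assume h: "h \<in> carrier G"
  have "N #> h \<in> carrier (G Mod N)"
    unfolding carrier_FactGroup using h by (rule imageI)
  then obtain Y where "Y \<in> carrier (G Mod N)"
      "N #> g \<in> generate (G Mod N) {Y}" "N #> h \<in> generate (G Mod N) {Y}"
    using gN group.cycliciser_iff[OF normal.factorgroup_is_group[OF N]] by blast
  moreover obtain y where "y \<in> carrier G" "Y = N #> y"
    using calculation(1) unfolding carrier_FactGroup by blast
  ultimately have y: "y \<in> carrier G"
      "N #> g \<in> generate (G Mod N) {N #> y}" "N #> h \<in> generate (G Mod N) {N #> y}"
    by simp_all
  obtain z1 g' where g': "z1 \<in> N" "g' \<in> generate G {y}" "g = z1 \<otimes> g'"
    using rcos_in_generate_FactGroup[OF N g y(1,2)] .
  obtain z2 h' where h': "z2 \<in> N" "h' \<in> generate G {y}" "h = z2 \<otimes> h'"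
    using rcos_in_generate_FactGroup[OF N h y(1,3)] .
  obtain w1 where w1: "w1 \<in> carrier G" "z1 \<in> generate G {w1}"
      "generate G {y} \<subseteq> generate G {w1}"
    using cycliciser_absorb[OF _ y(1)] g'(1) N_cyc by blast
  obtain w2 where w2: "w2 \<in> carrier G" "z2 \<in> generate G {w2}"
      "generate G {w1} \<subseteq> generate G {w2}"
    using cycliciser_absorb[OF _ w1(1)] h'(1) N_cyc by blast
  have "z1 \<in> generate G {w2}" "g' \<in> generate G {w2}" "h' \<in> generate G {w2}"
    using g' h' w1 w2 by auto
  hence "g \<in> generate G {w2}" "h \<in> generate G {w2}"
    using g'(3) h'(3) w2(1,2) subgroup.m_closed[OF generate_is_subgroup[of "{w2}"]] by auto
  thus "\<exists>w \<in> carrier G. g \<in> generate G {w} \<and> h \<in> generate G {w}"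
    using w2(1) by blast
qed

lemma cycliciser_FactGroup_cycliciser: "cycliciser (G Mod cycliciser G) = {cycliciser G}"
proof -
  let ?Z = "cycliciser G"
  have Z: "?Z \<lhd> G" by (rule normal_cycliciser)
  have "K = ?Z" if K: "K \<in> cycliciser (G Mod ?Z)" for K
  proof -
    obtain g where g: "g \<in> carrier G" "K = ?Z #> g"
      using K group.cycliciser_subset_carrier[OF normal.factorgroup_is_group[OF Z]]
      unfolding carrier_FactGroup by blast
    hence "g \<in> ?Z"
      using cycliciser_quotient_preimage[OF Z subset_refl] K by simp
    thus ?thesis
      using g(2) subgroup.rcos_const[OF subgroup_cycliciser is_group] by simp
  qed
  moreover have "?Z \<in> cycliciser (G Mod ?Z)"
    using group.one_in_cycliciser[OF normal.factorgroup_is_group[OF Z]] by simp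
  ultimately show ?thesis by blast
qed

lemma cycliciser_subset_if_FactGroup_trivial:
  assumes N: "N \<lhd> G" and trivial: "cycliciser (G Mod N) = {N}"
  shows "cycliciser G \<subseteq> N"
proof
  fix c assume c: "c \<in> cycliciser G"
  have "N #> c \<in> cycliciser (G Mod N)"
    using group_hom.cycliciser_image[OF r_coset_group_hom[OF N] carrier_FactGroup[symmetric] c] .
  hence "N #> c = N"
    using trivial by simp
  thus "c \<in> N"
    using rcos_self[OF _ normal_imp_subgroup[OF N]] c cycliciser_subset_carrier by auto
qed

end

theorem lemma2p2:
  fixes G :: "('a, 'b) monoid_scheme"
  assumes "group G" and "finite (carrier G)" and "min_gen_size G \<ge> 2"
  shows "cycliciser (G Mod (cycliciser G)) = {\<one>\<^bsub>G Mod (cycliciser G)\<^esub>}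
    \<and> (\<forall>N. N \<lhd> G \<and> cycliciser (G Mod N) = {\<one>\<^bsub>G Mod N\<^esub>} \<longrightarrow> cycliciser G \<subseteq> N)"
  using group.cycliciser_FactGroup_cycliciser[OF assms(1)]
    group.cycliciser_subset_if_FactGroup_trivial[OF assms(1)]
  by simp

end
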